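(* Let an explicit non-confluent Runge--Kutta method $(A,b)$ with step-size coefficient $\gamma(A,b)$ be given. Then the time-step restriction $$0\le\Delta t\,\frac{q_k(u,t)}{\Delta x}\le\gamma(A,b)\quad\text{for all }k,u,t$$ is sharp: it guarantees nonnegativity of the numerical solution for every problem of the form $u_k'=q_k(u,t)(u_{k-1}-u_k)/\Delta x$ ($k=1,\dots,N$, $u_0:=u_N$) with nonnegative initial data and nonnegative $q_k$, and for every $\tilde\gamma>\gamma(A,b)$ the restriction $0\le\Delta t\,q_k(u,t)/\Delta x\le\tilde\gamma$ does not guarantee nonnegativity of the numerical solution for all such problems.
   Context: An $m$-stage explicit Runge--Kutta method is given by strictly lower-triangular $A=(a_{ij})\in\mathbb{R}^{m\times m}$ and $b\in\mathbb{R}^m$, nodes $c_i=\sum_ja_{ij}$; non-confluent means the $c_i$ are pairwise distinct. Applied to the ODE system with step $\Delta t$: $y^i_k=u^n_k+\sum_{j<i}a_{ij}\xi^j_k(y^j_{k-1}-y^j_k)$, $u^{n+1}_k=u^n_k+\sum_ib_i\xi^i_k(y^i_{k-1}-y^i_k)$, $\xi^j_k=\frac{\Delta t}{\Delta x}q_k(y^j,t_n+c_j\Delta t)$, periodic indices. Treating the $\xi^j_\ell$ as independent variables on the grid $\ell\in\mathbb{Z}$, $u^{n+1}_k=\sum_{i=0}^mP_i(\xi)u^n_{k-i}$ for polynomials $P_i$ (independent of $k$) in the $m(m+1)/2$ variables $\xi^j_\ell$, $1\le j\le m$, $k-(m-j)\le\ell\le k$. The step-size coefficient is $\gamma(A,b)=\sup\{\delta\ge0:P_i(\xi)\ge0\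 \forall i,\ \forall\xi\in[0,\delta]^{m(m+1)/2}\}$ (or $0$ if empty). *)

theory Defs
  imports Complex_Main "HOL-Library.Extended_Real"
begin

text \<open>An m-stage explicit Runge-Kutta method: stages are numbered 1..m,
  A :: nat => nat => real gives a_ij, b :: nat => real gives b_i.\<close>

definition rk_node :: "nat \<Rightarrow> (nat \<Rightarrow> nat \<Rightarrow> real) \<Rightarrow> nat \<Rightarrow> real" where
  "rk_node m A i = (\<Sum>j\<in>{1..m}. A i j)"

definition explicit_rk :: "nat \<Rightarrow> (nat \<Rightarrow> nat \<Rightarrow> real) \<Rightarrow> bool" where
  "explicit_rk m A \<longleftrightarrow> (\<forall>i\<in>{1..m}. \<forall>j\<in>{1..m}. i \<le> j \<longrightarrow> A i j = 0)"

definition non_confluent :: "nat \<Rightarrow> (nat \<Rightarrow> nat \<Rightarrow> real) \<Rightarrow> bool" where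
  "non_confluent m A \<longleftrightarrow> inj_on (rk_node m A) {1..m}"

text \<open>xi j l = the variable xi^j_l; u :: int => real is the grid function u^n.
  ist A xi u i = list of the stage functions y^1,...,y^i.\<close>

primrec ist :: "(nat \<Rightarrow> nat \<Rightarrow> real) \<Rightarrow> (nat \<Rightarrow> int \<Rightarrow> real) \<Rightarrow> (int \<Rightarrow> real)
    \<Rightarrow> nat \<Rightarrow> (int \<Rightarrow> real) list" where
  "ist A xi u 0 = []"
| "ist A xi u (Suc i) = ist A xi u i @
     [\<lambda>k. u k + (\<Sum>j\<in>{1..i}. A (Suc i) j * xi j k *
          ((ist A xi u i ! (j-1)) (k-1) - (ist A xi u i ! (j-1)) k))]"

definition iout :: "nat \<Rightarrow> (nat \<Rightarrow> nat \<Rightarrow> real) \<Rightarrow> (nat \<Rightarrow> real) \<Rightarrow> (nat \<Rightarrow> int \<Rightarrow> real)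
    \<Rightarrow> (int \<Rightarrow> real) \<Rightarrow> int \<Rightarrow> real" where
  "iout m A b xi u k = u k + (\<Sum>i\<in>{1..m}. b i * xi i k *
      ((ist A xi u m ! (i-1)) (k-1) - (ist A xi u m ! (i-1)) k))"

text \<open>P_i(xi): the coefficient of u^n_{k-i} in u^{n+1}_k (taken at k = 0,
  the P_i being independent of k).\<close>

definition rkP :: "nat \<Rightarrow> (nat \<Rightarrow> nat \<Rightarrow> real) \<Rightarrow> (nat \<Rightarrow> real) \<Rightarrow> nat
    \<Rightarrow> (nat \<Rightarrow> int \<Rightarrow> real) \<Rightarrow> real" where
  "rkP m A b i xi = iout m A b xi (\<lambda>l. if l = - int i then 1 else 0) 0"

definition gamma_ok :: "nat \<Rightarrow> (nat \<Rightarrow> nat \<Rightarrow> real) \<Rightarrow> (nat \<Rightarrow> real) \<Rightarrow> real \<Rightarrow> bool" where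
  "gamma_ok m A b \<delta> \<longleftrightarrow> \<delta> \<ge> 0 \<and>
     (\<forall>xi. (\<forall>j l. 1 \<le> j \<and> j \<le> m \<and> - int (m - j) \<le> l \<and> l \<le> 0
                  \<longrightarrow> 0 \<le> xi j l \<and> xi j l \<le> \<delta>)
        \<longrightarrow> (\<forall>i\<le>m. rkP m A b i xi \<ge> 0))"

text \<open>Step-size coefficient (may be +infinity, hence ereal).\<close>

definition rk_gamma :: "nat \<Rightarrow> (nat \<Rightarrow> nat \<Rightarrow> real) \<Rightarrow> (nat \<Rightarrow> real) \<Rightarrow> ereal" where
  "rk_gamma m A b = (if {\<delta>. gamma_ok m A b \<delta>} = {} then 0
                     else Sup (ereal ` {\<delta>. gamma_ok m A b \<delta>}))"

text \<open>Grid vectors are real lists of length N, indices 0..N-1 (k = 0 plays the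
  role of the paper's k = N, so the periodic predecessor of 0 is N-1).\<close>

definition pred_idx :: "nat \<Rightarrow> nat \<Rightarrow> nat" where
  "pred_idx N k = (if k = 0 then N - 1 else k - 1)"

primrec pst :: "nat \<Rightarrow> (nat \<Rightarrow> nat \<Rightarrow> real) \<Rightarrow> nat \<Rightarrow> (nat \<Rightarrow> real list \<Rightarrow> real \<Rightarrow> real)
    \<Rightarrow> real \<Rightarrow> real \<Rightarrow> real \<Rightarrow> real list \<Rightarrow> nat \<Rightarrow> real list list" where
  "pst m A N q dt dx t u 0 = []"
| "pst m A N q dt dx t u (Suc i) = pst m A N q dt dx t u i @
     [map (\<lambda>k. u ! k + (\<Sum>j\<in>{1..i}. A (Suc i) j *
            (dt / dx * q k (pst m A N q dt dx t u i ! (j-1)) (t + rk_node m A j * dt)) *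
            (pst m A N q dt dx t u i ! (j-1) ! pred_idx N k - pst m A N q dt dx t u i ! (j-1) ! k)))
        [0..<N]]"

definition rk_step :: "nat \<Rightarrow> (nat \<Rightarrow> nat \<Rightarrow> real) \<Rightarrow> (nat \<Rightarrow> real) \<Rightarrow> nat
    \<Rightarrow> (nat \<Rightarrow> real list \<Rightarrow> real \<Rightarrow> real) \<Rightarrow> real \<Rightarrow> real \<Rightarrow> real \<Rightarrow> real list \<Rightarrow> real list" where
  "rk_step m A b N q dt dx t u =
     (let Y = pst m A N q dt dx t u m in
      map (\<lambda>k. u ! k + (\<Sum>i\<in>{1..m}. b i *
            (dt / dx * q k (Y ! (i-1)) (t + rk_node m A i * dt)) *
            (Y ! (i-1) ! pred_idx N k - Y ! (i-1) ! k))) [0..<N])"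

primrec rk_sol :: "nat \<Rightarrow> (nat \<Rightarrow> nat \<Rightarrow> real) \<Rightarrow> (nat \<Rightarrow> real) \<Rightarrow> nat
    \<Rightarrow> (nat \<Rightarrow> real list \<Rightarrow> real \<Rightarrow> real) \<Rightarrow> real \<Rightarrow> real \<Rightarrow> real list \<Rightarrow> nat \<Rightarrow> real list" where
  "rk_sol m A b N q dt dx u0 0 = u0"
| "rk_sol m A b N q dt dx u0 (Suc n) =
     rk_step m A b N q dt dx (real n * dt) (rk_sol m A b N q dt dx u0 n)"

definition admissible :: "nat \<Rightarrow> (nat \<Rightarrow> real list \<Rightarrow> real \<Rightarrow> real) \<Rightarrow> real \<Rightarrow> real \<Rightarrow> ereal \<Rightarrow> bool" where
  "admissible N q dt dx g \<longleftrightarrow> N \<ge> 1 \<and> dt > 0 \<and> dx > 0 \<and>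
     (\<forall>k<N. \<forall>u t. length u = N \<longrightarrow>
        0 \<le> q k u t \<and> 0 \<le> dt * q k u t / dx \<and> ereal (dt * q k u t / dx) \<le> g)"

end

theory Submission
  imports Defs
begin

text \<open>One step of the scheme is linear in the old solution: the new value at k is
  \<open>\<Sum>p. u_(k-p) P_p(\<xi>)\<close>, with \<open>\<xi>\<close> the local Courant numbers \<open>\<Delta>t q/\<Delta>x\<close> of the stages.
  Under the restriction these lie in \<open>[0, \<gamma>]\<close>, and \<open>\<gamma>\<close> is itself admissible because the
  \<open>P_p\<close> are continuous in a common scaling of \<open>\<xi>\<close>; so all coefficients are nonnegative.
  Conversely, above \<open>\<gamma>\<close> some \<open>P_i(\<xi>)\<close> is negative for Courant numbers in \<open>[0, g]\<close>.
  Since the nodes are distinct, a coefficient \<open>q\<close> depending on the time argument can realise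
  \<open>\<xi>\<close> exactly, stage by stage, and a unit initial pulse then has \<open>u^1 = P_i(\<xi>) < 0\<close>.\<close>

section \<open>Formal expansion of one step on the infinite grid\<close>

text \<open>Stages are numbered from 0 here: \<open>rk_stage A xi u s\<close> is the paper's \<open>y^(s+1)\<close>.\<close>

definition rk_stage :: "(nat \<Rightarrow> nat \<Rightarrow> real) \<Rightarrow> (nat \<Rightarrow> int \<Rightarrow> real) \<Rightarrow> (int \<Rightarrow> real)
    \<Rightarrow> nat \<Rightarrow> int \<Rightarrow> real" where
  "rk_stage A xi u s = ist A xi u (Suc s) ! s"

lemma length_ist [simp]: "length (ist A xi u i) = i"
  by (induction i) auto

lemma nth_ist: "s < i \<Longrightarrow> ist A xi u i ! s = rk_stage A xi u s"
proof (induction i)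
  case (Suc i)
  then show ?case
    by (cases "s < i") (auto simp: nth_append rk_stage_def less_Suc_eq)
qed simp

lemma rk_stage_rec:
  "rk_stage A xi u s k = u k + (\<Sum>j\<in>{1..s}. A (Suc s) j * xi j k *
      (rk_stage A xi u (j-1) (k-1) - rk_stage A xi u (j-1) k))"
proof -
  have "rk_stage A xi u s k = u k + (\<Sum>j\<in>{1..s}. A (Suc s) j * xi j k *
      ((ist A xi u s ! (j-1)) (k-1) - (ist A xi u s ! (j-1)) k))"
    by (simp add: rk_stage_def nth_append)
  also have "\<dots> = u k + (\<Sum>j\<in>{1..s}. A (Suc s) j * xi j k *
      (rk_stage A xi u (j-1) (k-1) - rk_stage A xi u (j-1) k))"
    by (auto simp: nth_ist intro!: sum.cong)
  finally show ?thesis .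
qed

lemma iout_eq_rk_stage:
  "iout m A b xi u k = u k + (\<Sum>i\<in>{1..m}. b i * xi i k *
      (rk_stage A xi u (i-1) (k-1) - rk_stage A xi u (i-1) k))"
  by (auto simp: iout_def nth_ist intro!: sum.cong)

lemma rk_stage_shift:
  "rk_stage A (\<lambda>j l. xi j (l + c)) (\<lambda>l. u (l + c)) s k = rk_stage A xi u s (k + c)"
proof (induction s arbitrary: k rule: less_induct)
  case (less s)
  then show ?case
    by (subst (1 2) rk_stage_rec) (auto simp: algebra_simps intro!: sum.cong)
qed

lemma iout_shift:
  "iout m A b (\<lambda>j l. xi j (l + c)) (\<lambda>l. u (l + c)) k = iout m A b xi u (k + c)"
  by (auto simp: iout_eq_rk_stage rk_stage_shift algebra_simps intro!: sum.cong)

lemma rk_stage_sum: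
  assumes "finite P"
  shows "rk_stage A xi (\<lambda>l. \<Sum>p\<in>P. a p * f p l) s k = (\<Sum>p\<in>P. a p * rk_stage A xi (f p) s k)"
proof (induction s arbitrary: k rule: less_induct)
  case (less s)
  have "rk_stage A xi (\<lambda>l. \<Sum>p\<in>P. a p * f p l) s k =
      (\<Sum>p\<in>P. a p * f p k) + (\<Sum>j\<in>{1..s}. A (Suc s) j * xi j k *
          ((\<Sum>p\<in>P. a p * rk_stage A xi (f p) (j-1) (k-1)) - (\<Sum>p\<in>P. a p * rk_stage A xi (f p) (j-1) k)))"
    by (subst rk_stage_rec) (auto simp: less.IH intro!: sum.cong)
  also have "\<dots> = (\<Sum>p\<in>P. a p * f p k) + (\<Sum>j\<in>{1..s}. \<Sum>p\<in>P. a p * (A (Suc s) j * xi j k *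
          (rk_stage A xi (f p) (j-1) (k-1) - rk_stage A xi (f p) (j-1) k)))"
    by (simp add: sum_subtractf[symmetric] sum_distrib_left algebra_simps)
  also have "\<dots> = (\<Sum>p\<in>P. a p * rk_stage A xi (f p) s k)"
    by (subst sum.swap, subst (2) rk_stage_rec)
      (simp add: sum.distrib sum_distrib_left algebra_simps)
  finally show ?case .
qed

lemma iout_sum:
  assumes "finite P"
  shows "iout m A b xi (\<lambda>l. \<Sum>p\<in>P. a p * f p l) k = (\<Sum>p\<in>P. a p * iout m A b xi (f p) k)"
  unfolding iout_eq_rk_stage using assms
  by (simp add: rk_stage_sum sum_subtractf[symmetric] sum_distrib_left sum.distrib,
      subst sum.swap, simp add: sum_distrib_left sum.distrib algebra_simps)

lemma rk_stage_local:
  assumes "\<And>l. k - int s \<le> l \<Longrightarrow> l \<le> k \<Longrightarrow> u l = v l"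
    and "\<And>j l. 1 \<le> j \<Longrightarrow> j \<le> s \<Longrightarrow> k - int (s - j) \<le> l \<Longrightarrow> l \<le> k \<Longrightarrow> xi j l = xi' j l"
  shows "rk_stage A xi u s k = rk_stage A xi' v s k"
  using assms
proof (induction s arbitrary: k rule: less_induct)
  case (less s)
  have "rk_stage A xi u (j-1) k' = rk_stage A xi' v (j-1) k'"
    if j: "j \<in> {1..s}" and k': "k - 1 \<le> k'" "k' \<le> k" for j k'
    using j k' by (intro less.IH) (auto intro!: less.prems)
  moreover have "xi j k = xi' j k" if "j \<in> {1..s}" for j
    using that by (intro less.prems) auto
  ultimately show ?case
    by (subst (1 2) rk_stage_rec) (auto intro!: sum.cong less.prems)
qed

lemma iout_local:
  assumes "\<And>l. k - int m \<le> l \<Longrightarrow> l \<le> k \<Longrightarrow> u l = v l"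
    and "\<And>j l. 1 \<le> j \<Longrightarrow> j \<le> m \<Longrightarrow> k - int (m - j) \<le> l \<Longrightarrow> l \<le> k \<Longrightarrow> xi j l = xi' j l"
  shows "iout m A b xi u k = iout m A b xi' v k"
proof -
  have "rk_stage A xi u (i-1) k' = rk_stage A xi' v (i-1) k'"
    if i: "i \<in> {1..m}" and k': "k - 1 \<le> k'" "k' \<le> k" for i k'
    using i k' by (intro rk_stage_local) (auto intro!: assms)
  moreover have "xi i k = xi' i k" if "i \<in> {1..m}" for i
    using that by (intro assms) auto
  ultimately show ?thesis
    by (auto simp: iout_eq_rk_stage intro!: sum.cong assms)
qed

lemma iout_expansion:
  "iout m A b xi u k = (\<Sum>p\<in>{0..m}. u (k - int p) * rkP m A b p (\<lambda>j l. xi j (l + k)))"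
proof -
  define pulse where "pulse = (\<lambda>(c::int) (l::int). if l = c then (1::real) else 0)"
  define w where "w = (\<lambda>l. \<Sum>p\<in>{0..m}. u (k - int p) * pulse (k - int p) l)"
  have "u l = w l" if "k - int m \<le> l" "l \<le> k" for l
  proof -
    have "w l = (\<Sum>p\<in>{0..m}. if p = nat (k - l) then u l else 0)"
      unfolding w_def pulse_def using that by (intro sum.cong) auto
    then show ?thesis
      using that by (simp add: nat_le_iff)
  qed
  then have "iout m A b xi u k = iout m A b xi w k"
    by (intro iout_local) auto
  also have "\<dots> = (\<Sum>p\<in>{0..m}. u (k - int p) * iout m A b xi (pulse (k - int p)) k)"
    unfolding w_def by (rule iout_sum) simp
  also have "\<dots> = (\<Sum>p\<in>{0..m}. u (k - int p) * rkP m A b p (\<lambda>j l. xi j (l + k)))"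
  proof (intro sum.cong refl arg_cong2[where f = "(*)"])
    fix p
    have "(\<lambda>l. pulse (k - int p) (l + k)) = (\<lambda>l. if l = - int p then 1 else 0)"
      unfolding pulse_def by auto
    then show "iout m A b xi (pulse (k - int p)) k = rkP m A b p (\<lambda>j l. xi j (l + k))"
      using iout_shift[of m A b xi k "pulse (k - int p)" 0] by (simp add: rkP_def)
  qed
  finally show ?thesis .
qed

lemma isCont_rk_stage_scale: "isCont (\<lambda>c. rk_stage A (\<lambda>j l. c * xi j l) u s k) x"
proof (induction s arbitrary: k rule: less_induct)
  case (less s)
  then show ?case
    by (subst rk_stage_rec[abs_def]) (auto intro!: continuous_intros)
qed

lemma isCont_rkP_scale: "isCont (\<lambda>c. rkP m A b i (\<lambda>j l. c * xi j l)) x"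
  unfolding rkP_def iout_eq_rk_stage by (intro continuous_intros isCont_rk_stage_scale)

section \<open>The step-size coefficient\<close>

definition rk_support :: "nat \<Rightarrow> (nat \<times> int) set" where
  "rk_support m = {(j, l). 1 \<le> j \<and> j \<le> m \<and> - int (m - j) \<le> l \<and> l \<le> 0}"

lemma finite_rk_support: "finite (rk_support m)"
  by (rule finite_subset[of _ "{1..m} \<times> {- int m..0}"]) (auto simp: rk_support_def)

lemma gamma_okI:
  assumes "0 \<le> \<delta>"
    and "\<And>xi i. (\<And>j l. (j, l) \<in> rk_support m \<Longrightarrow> 0 \<le> xi j l \<and> xi j l \<le> \<delta>) \<Longrightarrow> i \<le> m
            \<Longrightarrow> 0 \<le> rkP m A b i xi"
  shows "gamma_ok m A b \<delta>"
  using assms by (auto simp: gamma_ok_def rk_support_def)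

lemma gamma_okD:
  assumes "gamma_ok m A b \<delta>" "\<And>j l. (j, l) \<in> rk_support m \<Longrightarrow> 0 \<le> xi j l \<and> xi j l \<le> \<delta>"
    and "i \<le> m"
  shows "0 \<le> rkP m A b i xi"
  using assms by (auto simp: gamma_ok_def rk_support_def)

lemma gamma_ok_mono: "gamma_ok m A b d \<Longrightarrow> 0 \<le> d' \<Longrightarrow> d' \<le> d \<Longrightarrow> gamma_ok m A b d'"
  by (rule gamma_okI) (auto intro!: gamma_okD[of m A b d] dest: order_trans)

lemma gamma_ok_0: "gamma_ok m A b 0"
proof (rule gamma_okI)
  fix xi :: "nat \<Rightarrow> int \<Rightarrow> real" and i
  assume "\<And>j l. (j, l) \<in> rk_support m \<Longrightarrow> 0 \<le> xi j l \<and> xi j l \<le> 0"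
  then have "rkP m A b i xi = rkP m A b i (\<lambda>_ _. 0)"
    unfolding rkP_def by (intro iout_local) (force simp: rk_support_def)+
  then show "0 \<le> rkP m A b i xi"
    by (simp add: rkP_def iout_eq_rk_stage)
qed simp

lemma rk_gamma_eq_Sup: "rk_gamma m A b = Sup (ereal ` {d. gamma_ok m A b d})"
  unfolding rk_gamma_def using gamma_ok_0 by auto

lemma rk_gamma_nonneg: "0 \<le> rk_gamma m A b"
  unfolding rk_gamma_eq_Sup zero_ereal_def using gamma_ok_0 by (intro SUP_upper) auto

text \<open>Admissibility is a closed condition: scale a box vector into every smaller box and
  pass to the limit.\<close>

lemma gamma_ok_of_less:
  assumes r: "0 < r" and below: "\<And>d. 0 \<le> d \<Longrightarrow> d < r \<Longrightarrow> gamma_ok m A b d"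
  shows "gamma_ok m A b r"
proof (rule gamma_okI)
  fix xi :: "nat \<Rightarrow> int \<Rightarrow> real" and i
  assume box: "\<And>j l. (j, l) \<in> rk_support m \<Longrightarrow> 0 \<le> xi j l \<and> xi j l \<le> r" and i: "i \<le> m"
  let ?f = "\<lambda>c. rkP m A b i (\<lambda>j l. c * xi j l)"
  have "(?f \<longlongrightarrow> ?f 1) (at_left 1)"
    using isCont_rkP_scale[where x = 1 and m = m and A = A and b = b and i = i and xi = xi]
    unfolding isCont_def by (rule tendsto_within_subset) simp
  moreover have "\<forall>\<^sub>F c in at_left 1. 0 \<le> ?f c"
    using eventually_at_left_real[of 0 "1::real"]
  proof (rule eventually_mono)
    fix c :: real assume c: "c \<in> {0<..<1}"
    have "0 \<le> c * xi j l \<and> c * xi j l \<le> c * r" if "(j, l) \<in> rk_support m" for j l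
      using box[OF that] c by (simp add: mult_left_mono)
    moreover have "gamma_ok m A b (c * r)"
      using c r by (intro below) auto
    ultimately show "0 \<le> ?f c"
      using i by (auto intro: gamma_okD)
  qed simp
  ultimately have "0 \<le> ?f 1"
    by (rule tendsto_lowerbound) simp
  then show "0 \<le> rkP m A b i xi" by simp
qed (use r in simp)

lemma gamma_ok_of_le_rk_gamma:
  assumes "0 \<le> x" "ereal x \<le> rk_gamma m A b"
  shows "gamma_ok m A b x"
proof (cases "x = 0")
  case True
  then show ?thesis by (simp add: gamma_ok_0)
next
  case False
  show ?thesis
  proof (rule gamma_ok_of_less)
    fix d assume d: "0 \<le> d" "d < x"
    then have "ereal d < rk_gamma m A b"
      by (intro less_le_trans[OF _ assms(2)]) simp
    then obtain d' where "gamma_ok m A b d'" "ereal d < ereal d'"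
      unfolding rk_gamma_eq_Sup less_SUP_iff by blast
    then show "gamma_ok m A b d"
      using d(1) by (auto intro: gamma_ok_mono)
  qed (use assms(1) False in simp)
qed

lemma rkP_nonneg:
  assumes box: "\<And>j l. (j, l) \<in> rk_support m \<Longrightarrow> 0 \<le> xi j l \<and> ereal (xi j l) \<le> rk_gamma m A b"
    and i: "i \<le> m"
  shows "0 \<le> rkP m A b i xi"
proof -
  \<comment> \<open>\<open>rk_gamma\<close> may be infinite, so use the largest of the finitely many relevant values.\<close>
  define V where "V = insert 0 ((\<lambda>(j, l). xi j l) ` rk_support m)"
  have V: "finite V" "V \<noteq> {}"
    by (auto simp: V_def finite_rk_support)
  have "Max V \<in> V" by (rule Max_in[OF V])
  then have "ereal (Max V) \<le> rk_gamma m A b"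
    using box rk_gamma_nonneg[of m A b] by (auto simp: V_def zero_ereal_def)
  moreover have "0 \<le> Max V"
    using V by (simp add: V_def)
  ultimately have "gamma_ok m A b (Max V)"
    by (intro gamma_ok_of_le_rk_gamma)
  moreover have "xi j l \<le> Max V" if "(j, l) \<in> rk_support m" for j l
    using V that by (intro Max_ge) (auto simp: V_def)
  ultimately show ?thesis
    using box i by (auto intro: gamma_okD)
qed

section \<open>The periodic scheme as an instance of the expansion\<close>

definition periodic_ext :: "nat \<Rightarrow> real list \<Rightarrow> int \<Rightarrow> real" where
  "periodic_ext N v l = v ! nat (l mod int N)"

definition scheme_xi :: "nat \<Rightarrow> (nat \<Rightarrow> nat \<Rightarrow> real) \<Rightarrow> nat \<Rightarrow> (nat \<Rightarrow> real list \<Rightarrow> real \<Rightarrow> real)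
    \<Rightarrow> real \<Rightarrow> real \<Rightarrow> real \<Rightarrow> real list \<Rightarrow> nat \<Rightarrow> int \<Rightarrow> real" where
  "scheme_xi m A N q dt dx t u j l =
     dt / dx * q (nat (l mod int N)) (pst m A N q dt dx t u m ! (j-1)) (t + rk_node m A j * dt)"

lemma nat_mod_less: "1 \<le> N \<Longrightarrow> nat (l mod int N) < N"
  by (simp add: nat_less_iff)

lemma nat_mod_pred: "1 \<le> N \<Longrightarrow> nat ((l - 1) mod int N) = pred_idx N (nat (l mod int N))"
proof -
  assume N: "1 \<le> N"
  have bounds: "0 \<le> l mod int N" "l mod int N < int N"
    using N by simp_all
  have "(l - 1) mod int N = (l mod int N - 1) mod int N"
    by (simp add: mod_diff_left_eq)
  also have "\<dots> = (if l mod int N = 0 then int N - 1 else l mod int N - 1)"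
    using N bounds by (auto simp: mod_pos_pos_trivial zmod_minus1)
  finally show ?thesis
    using N bounds by (auto simp: pred_idx_def nat_diff_distrib)
qed

lemma length_pst [simp]: "length (pst m A N q dt dx t u i) = i"
  by (induction i) auto

lemma nth_pst_add: "s < i \<Longrightarrow> pst m A N q dt dx t u (i + d) ! s = pst m A N q dt dx t u i ! s"
  by (induction d) (auto simp: nth_append)

lemma nth_pst_le: "s < i \<Longrightarrow> i \<le> m \<Longrightarrow> pst m A N q dt dx t u m ! s = pst m A N q dt dx t u i ! s"
  using nth_pst_add[of s i m A N q dt dx t u "m - i"] by simp

lemma length_nth_pst: "s < i \<Longrightarrow> length (pst m A N q dt dx t u i ! s) = N"
  by (induction i) (auto simp: nth_append less_Suc_eq)

lemma scheme_increment:
  assumes N: "1 \<le> N"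
    and stage: "\<And>l. periodic_ext N (pst m A N q dt dx t u m ! (j-1)) l =
                    rk_stage A (scheme_xi m A N q dt dx t u) (periodic_ext N u) (j-1) l"
  shows "dt / dx * q (nat (l mod int N)) (pst m A N q dt dx t u m ! (j-1)) (t + rk_node m A j * dt) *
           (pst m A N q dt dx t u m ! (j-1) ! pred_idx N (nat (l mod int N)) - pst m A N q dt dx t u m ! (j-1) ! nat (l mod int N))
       = scheme_xi m A N q dt dx t u j l *
           (rk_stage A (scheme_xi m A N q dt dx t u) (periodic_ext N u) (j-1) (l-1) -
            rk_stage A (scheme_xi m A N q dt dx t u) (periodic_ext N u) (j-1) l)"
  using stage[of l] stage[of "l-1"] nat_mod_pred[OF N, of l]
  by (simp add: periodic_ext_def scheme_xi_def)

lemma periodic_ext_pst: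
  assumes N: "1 \<le> N" and s: "s < m"
  shows "periodic_ext N (pst m A N q dt dx t u m ! s) l =
           rk_stage A (scheme_xi m A N q dt dx t u) (periodic_ext N u) s l"
  using s
proof (induction s arbitrary: l rule: less_induct)
  case (less s)
  let ?P = "pst m A N q dt dx t u" and ?X = "scheme_xi m A N q dt dx t u"
  define k where "k = nat (l mod int N)"
  have "?P m ! s = ?P (Suc s) ! s"
    using less.prems by (intro nth_pst_le) auto
  moreover have "?P s ! (j-1) = ?P m ! (j-1)" if "j \<in> {1..s}" for j
    using that less.prems by (intro nth_pst_le[symmetric]) auto
  ultimately have "periodic_ext N (?P m ! s) l = u ! k + (\<Sum>j\<in>{1..s}. A (Suc s) j *
      (dt / dx * q k (?P m ! (j-1)) (t + rk_node m A j * dt)) *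
      (?P m ! (j-1) ! pred_idx N k - ?P m ! (j-1) ! k))"
    using nat_mod_less[OF N, of l]
    by (auto simp: periodic_ext_def k_def nth_append intro!: sum.cong)
  also have "\<dots> = periodic_ext N u l + (\<Sum>j\<in>{1..s}. A (Suc s) j * ?X j l *
      (rk_stage A ?X (periodic_ext N u) (j-1) (l-1) - rk_stage A ?X (periodic_ext N u) (j-1) l))"
  proof (intro arg_cong2[where f = "(+)"] sum.cong refl)
    show "u ! k = periodic_ext N u l"
      by (simp add: periodic_ext_def k_def)
  next
    fix j assume j: "j \<in> {1..s}"
    have "periodic_ext N (?P m ! (j-1)) l' = rk_stage A ?X (periodic_ext N u) (j-1) l'" for l'
      using j less.prems by (intro less.IH) auto
    from scheme_increment[OF N this, of l]
    show "A (Suc s) j * (dt / dx * q k (?P m ! (j-1)) (t + rk_node m A j * dt)) *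
        (?P m ! (j-1) ! pred_idx N k - ?P m ! (j-1) ! k) =
      A (Suc s) j * ?X j l *
        (rk_stage A ?X (periodic_ext N u) (j-1) (l-1) - rk_stage A ?X (periodic_ext N u) (j-1) l)"
      unfolding k_def by (simp only: mult.assoc)
  qed
  also have "\<dots> = rk_stage A ?X (periodic_ext N u) s l"
    by (rule rk_stage_rec[symmetric])
  finally show ?case .
qed

lemma periodic_ext_rk_step:
  assumes N: "1 \<le> N"
  shows "periodic_ext N (rk_step m A b N q dt dx t u) l =
           iout m A b (scheme_xi m A N q dt dx t u) (periodic_ext N u) l"
proof -
  let ?P = "pst m A N q dt dx t u" and ?X = "scheme_xi m A N q dt dx t u"
  define k where "k = nat (l mod int N)"
  have "periodic_ext N (rk_step m A b N q dt dx t u) l = u ! k + (\<Sum>i\<in>{1..m}. b i *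
      (dt / dx * q k (?P m ! (i-1)) (t + rk_node m A i * dt)) *
      (?P m ! (i-1) ! pred_idx N k - ?P m ! (i-1) ! k))"
    using nat_mod_less[OF N, of l] by (simp add: rk_step_def Let_def periodic_ext_def k_def)
  also have "\<dots> = iout m A b ?X (periodic_ext N u) l"
    unfolding iout_eq_rk_stage
  proof (intro arg_cong2[where f = "(+)"] sum.cong refl)
    show "u ! k = periodic_ext N u l"
      by (simp add: periodic_ext_def k_def)
  next
    fix i assume i: "i \<in> {1..m}"
    have "periodic_ext N (?P m ! (i-1)) l' = rk_stage A ?X (periodic_ext N u) (i-1) l'" for l'
      using i by (intro periodic_ext_pst[OF N]) auto
    from scheme_increment[OF N this, of l]
    show "b i * (dt / dx * q k (?P m ! (i-1)) (t + rk_node m A i * dt)) *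
        (?P m ! (i-1) ! pred_idx N k - ?P m ! (i-1) ! k) =
      b i * ?X i l *
        (rk_stage A ?X (periodic_ext N u) (i-1) (l-1) - rk_stage A ?X (periodic_ext N u) (i-1) l)"
      unfolding k_def by (simp only: mult.assoc)
  qed
  finally show ?thesis .
qed

lemma rk_step_expansion:
  assumes "1 \<le> N" "k < N"
  shows "rk_step m A b N q dt dx t u ! k =
           (\<Sum>p\<in>{0..m}. periodic_ext N u (int k - int p) *
               rkP m A b p (\<lambda>j l. scheme_xi m A N q dt dx t u j (l + int k)))"
proof -
  have "rk_step m A b N q dt dx t u ! k = periodic_ext N (rk_step m A b N q dt dx t u) (int k)"
    using assms by (simp add: periodic_ext_def)
  then show ?thesis
    by (simp add: periodic_ext_rk_step[OF assms(1)] iout_expansion)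
qed

section \<open>Sharpness of the time-step restriction\<close>

lemma rk_step_nonneg:
  assumes adm: "admissible N q dt dx (rk_gamma m A b)"
    and nonneg: "\<And>k. k < N \<Longrightarrow> 0 \<le> u ! k" and k: "k < N"
  shows "0 \<le> rk_step m A b N q dt dx t u ! k"
proof -
  have N: "1 \<le> N" using adm by (simp add: admissible_def)
  have "0 \<le> scheme_xi m A N q dt dx t u j (l + int k) \<and>
        ereal (scheme_xi m A N q dt dx t u j (l + int k)) \<le> rk_gamma m A b"
    if "(j, l) \<in> rk_support m" for j l
  proof -
    have "length (pst m A N q dt dx t u m ! (j-1)) = N"
      using that by (intro length_nth_pst) (auto simp: rk_support_def)
    then show ?thesis
      using adm nat_mod_less[OF N, of "l + int k"]
      by (auto simp: admissible_def scheme_xi_def mult.commute)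
  qed
  then show ?thesis
    using nonneg nat_mod_less[OF N]
    by (auto simp: rk_step_expansion[OF N k] periodic_ext_def
        intro!: sum_nonneg mult_nonneg_nonneg rkP_nonneg)
qed

lemma rk_sol_nonneg:
  assumes "admissible N q dt dx (rk_gamma m A b)" "\<forall>k<N. 0 \<le> u0 ! k"
  shows "\<forall>k<N. 0 \<le> rk_sol m A b N q dt dx u0 n ! k"
  using assms by (induction n) (auto intro!: rk_step_nonneg)

text \<open>The counterexample: \<open>N = m + 1\<close>, \<open>\<Delta>t = \<Delta>x = 1\<close>, and \<open>q\<close> reads off the stage from
  its time argument (distinct nodes) and returns the offending \<open>xi\<close>, clamped to \<open>[0, g]\<close>.\<close>

lemma rk_sol_negative_beyond_gamma:
  assumes nc: "non_confluent m A" and gt: "rk_gamma m A b < ereal g"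
  shows "\<exists>N q dt dx u0. admissible N q dt dx (ereal g) \<and> length u0 = N \<and> (\<forall>k<N. 0 \<le> u0 ! k) \<and>
           (\<exists>n. \<exists>k<N. rk_sol m A b N q dt dx u0 n ! k < 0)"
proof -
  have g: "0 < g"
    using le_less_trans[OF rk_gamma_nonneg gt] by simp
  have "\<not> gamma_ok m A b g"
  proof
    assume "gamma_ok m A b g"
    then have "ereal g \<le> rk_gamma m A b"
      unfolding rk_gamma_eq_Sup by (intro SUP_upper) auto
    with gt show False by simp
  qed
  then have "\<not> (\<forall>xi i. (\<forall>j l. (j, l) \<in> rk_support m \<longrightarrow> 0 \<le> xi j l \<and> xi j l \<le> g) \<longrightarrow>
      i \<le> m \<longrightarrow> 0 \<le> rkP m A b i xi)"
    using g gamma_okI[where \<delta> = g and m = m and A = A and b = b] by auto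
  then obtain xi i where box: "\<And>j l. (j, l) \<in> rk_support m \<Longrightarrow> 0 \<le> xi j l \<and> xi j l \<le> g"
    and i: "i \<le> m" and neg: "rkP m A b i xi < 0"
    by (auto simp: not_le)
  define c where "c = rk_node m A"
  define N where "N = Suc m"
  define q where "q = (\<lambda>(k::nat) (v::real list) (t::real). max 0 (min g
      (if t \<in> c ` {1..m} then xi (inv_into {1..m} c t) (int k - int m) else 0)))"
  define u0 where "u0 = map (\<lambda>k. if k = m - i then (1::real) else 0) [0..<N]"
  have adm: "admissible N q 1 1 (ereal g)"
    using g by (auto simp: admissible_def q_def N_def)
  let ?X = "scheme_xi m A N q 1 1 0 u0"
  have pulse: "periodic_ext N u0 (int m - int p) = (if p = i then 1 else 0)" if "p \<le> m" for p
  proof -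
    have "(int m - int p) mod int N = int (m - p)"
      using that by (simp add: N_def of_nat_diff)
    then show ?thesis
      using that i by (auto simp: periodic_ext_def u0_def N_def nth_append simp del: upt_Suc)
  qed
  have realised: "?X j (l + int m) = xi j l" if "(j, l) \<in> rk_support m" for j l
  proof -
    have "(l + int m) mod int N = l + int m"
      using that by (intro mod_pos_pos_trivial) (auto simp: rk_support_def N_def)
    moreover have "inv_into {1..m} c (c j) = j"
      using nc that by (intro inv_into_f_f) (auto simp: non_confluent_def c_def rk_support_def)
    ultimately show ?thesis
      using that box[OF that] by (auto simp: scheme_xi_def q_def c_def[symmetric] rk_support_def)
  qed
  have "rk_sol m A b N q 1 1 u0 1 ! m = (\<Sum>p\<in>{0..m}. periodic_ext N u0 (int m - int p) *
      rkP m A b p (\<lambda>j l. ?X j (l + int m)))"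
    using rk_step_expansion[of N m m A b q 1 1 0 u0] by (simp add: N_def)
  also have "\<dots> = (\<Sum>p\<in>{0..m}. if p = i then rkP m A b p (\<lambda>j l. ?X j (l + int m)) else 0)"
    by (intro sum.cong) (auto simp: pulse)
  also have "\<dots> = rkP m A b i (\<lambda>j l. ?X j (l + int m))"
    using i by simp
  also have "\<dots> = rkP m A b i xi"
    unfolding rkP_def
  proof (rule iout_local)
    fix j l assume "1 \<le> j" "j \<le> m" "0 - int (m - j) \<le> l" "l \<le> 0"
    then show "?X j (l + int m) = xi j l"
      by (intro realised) (simp add: rk_support_def)
  qed simp
  finally have "rk_sol m A b N q 1 1 u0 1 ! m < 0"
    using neg by simp
  moreover have "length u0 = N" "\<forall>k<N. 0 \<le> u0 ! k"
    by (auto simp: u0_def)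
  ultimately show ?thesis
    using adm unfolding N_def by blast
qed

theorem corollary1:
  fixes m :: nat and A :: "nat \<Rightarrow> nat \<Rightarrow> real" and b :: "nat \<Rightarrow> real"
  assumes "m \<ge> 1" and "explicit_rk m A" and "non_confluent m A"
  shows "(\<forall>N q dt dx u0. admissible N q dt dx (rk_gamma m A b) \<longrightarrow>
            length u0 = N \<longrightarrow> (\<forall>k<N. u0 ! k \<ge> 0) \<longrightarrow>
            (\<forall>n. \<forall>k<N. rk_sol m A b N q dt dx u0 n ! k \<ge> 0))
       \<and> (\<forall>g::real. ereal g > rk_gamma m A b \<longrightarrow>
            (\<exists>N q dt dx u0. admissible N q dt dx (ereal g) \<and>
               length u0 = N \<and> (\<forall>k<N. u0 ! k \<ge> 0) \<and>
               (\<exists>n. \<exists>k<N. rk_sol m A b N q dt dx u0 n ! k < 0)))"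
proof (intro conjI allI impI)
  fix N q dt dx n k and u0 :: "real list"
  assume "admissible N q dt dx (rk_gamma m A b)" "\<forall>k<N. 0 \<le> u0 ! k" "k < N"
  then show "0 \<le> rk_sol m A b N q dt dx u0 n ! k"
    using rk_sol_nonneg by blast
next
  fix g :: real
  assume "rk_gamma m A b < ereal g"
  then show "\<exists>N q dt dx u0. admissible N q dt dx (ereal g) \<and> length u0 = N \<and> (\<forall>k<N. 0 \<le> u0 ! k) \<and>
      (\<exists>n. \<exists>k<N. rk_sol m A b N q dt dx u0 n ! k < 0)"
    by (rule rk_sol_negative_beyond_gamma[OF assms(3)])
qed

end
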